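(* Let $m,n\ge 1$ and let $U=\begin{pmatrix}1&1\\0&1\end{pmatrix}$, $V=\begin{pmatrix}1&0\\1&1\end{pmatrix}$ (representing, under an identification $\mathrm{Mod}(T^2)\cong\mathrm{SL}(2,\mathbb{Z})$, the mapping classes $\tau_a^{-1}$ and $\tau_b$, where $\tau_a,\tau_b$ are Dehn twists about simple closed curves $a,b$ on the torus with geometric intersection number $1$). Among all words consisting of exactly $m$ letters $U$ and $n$ letters $V$ in any order, the word $U^mV^n$ (i.e. $\tau_a^{-m}\tau_b^n$, up to cyclic permutation) has the smallest stable translation length on the Farey graph $\mathcal{F}$. Moreover, $l_{\mathcal{C}}(U^mV^n)\le 2$.
   Context: The Farey graph $\mathcal{F}$ (the curve graph of the torus) has vertex set $\mathbb{Q}\cup\{\infty\}$, $p/q$ and $r/s$ adjacent iff $|ps-qr|=1$, with path metric $d_{\mathcal{C}}$ of unit edge lengths; $\begin{pmatrix}a&b\\c&d\end{pmatrix}\in\mathrm{SL}(2,\mathbb{Z})$ acts by $p/q\mapsto (ap+bq)/(cp+dq)$. The stable translation length of $g$ is $l_{\mathcal{C}}(g)=\liminf_{j\to\infty} d_{\mathcal{C}}(v,g^j(v))/j$ for any vertex $v$. Every word in the letters $U,V$ containing both letters is an Anosov element (absolute trace $>2$). *)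

theory Defs
  imports "HOL-Analysis.Analysis"
begin

text \<open>Vertices of the Farey graph: Q \<union> {\<infinity>}, with p/q represented by the coprime pair (p,q)
  normalised to q > 0, and \<infinity> represented by (1,0).\<close>
definition farey_vertex :: "int \<times> int \<Rightarrow> bool" where
  "farey_vertex v = (case v of (p, q) \<Rightarrow> coprime p q \<and> (q > 0 \<or> (q = 0 \<and> p = 1)))"

definition farey_inf :: "int \<times> int" where
  "farey_inf = (1, 0)"

definition farey_adj :: "int \<times> int \<Rightarrow> int \<times> int \<Rightarrow> bool" where
  "farey_adj v w = (farey_vertex v \<and> farey_vertex w \<and>
     (case v of (p, q) \<Rightarrow> case w of (r, s) \<Rightarrow> \<bar>p * s - q * r\<bar> = 1))"

text \<open>Path metric with unit edge lengths (the Farey graph is connected).\<close>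
definition farey_dist :: "int \<times> int \<Rightarrow> int \<times> int \<Rightarrow> nat" where
  "farey_dist v w = (LEAST k. (farey_adj ^^ k) v w)"

text \<open>2x2 integer matrices (a,b,c,d) = [[a,b],[c,d]].\<close>
type_synonym mat2 = "int \<times> int \<times> int \<times> int"

definition mat2_mult :: "mat2 \<Rightarrow> mat2 \<Rightarrow> mat2" where
  "mat2_mult M N = (case M of (a, b, c, d) \<Rightarrow> case N of (e, f, g, h) \<Rightarrow>
     (a * e + b * g, a * f + b * h, c * e + d * g, c * f + d * h))"

definition mat2_id :: mat2 where "mat2_id = (1, 0, 0, 1)"

definition farey_norm :: "int \<times> int \<Rightarrow> int \<times> int" where
  "farey_norm v = (case v of (x, y) \<Rightarrow> if y < 0 \<or> (y = 0 \<and> x < 0) then (- x, - y) else (x, y))"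

definition mat2_act :: "mat2 \<Rightarrow> int \<times> int \<Rightarrow> int \<times> int" where
  "mat2_act M v = (case M of (a, b, c, d) \<Rightarrow> case v of (p, q) \<Rightarrow>
     farey_norm (a * p + b * q, c * p + d * q))"

definition matU :: mat2 where "matU = (1, 1, 0, 1)"
definition matV :: mat2 where "matV = (1, 0, 1, 1)"

definition letter :: "bool \<Rightarrow> mat2" where
  "letter x = (if x then matU else matV)"

definition word_mat :: "bool list \<Rightarrow> mat2" where
  "word_mat w = foldr (\<lambda>x M. mat2_mult (letter x) M) w mat2_id"

definition stable_len :: "mat2 \<Rightarrow> ereal" where
  "stable_len g = liminf (\<lambda>j::nat. ereal (real (farey_dist farey_inf ((mat2_act g ^^ j) farey_inf)) / real j))"

end

theory Submission
  imports Defs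
begin

text \<open>A word \<open>w\<close> in \<open>U\<close> and \<open>V\<close> is a matrix with nonnegative entries, positive if \<open>w\<close>
  contains both letters. For such a positive prefix \<open>P\<close> of \<open>w\<^sup>j\<close> the Farey edge
  \<open>{P\<infinity>, P0}\<close> separates \<open>\<infinity>\<close> from \<open>w\<^sup>j\<infinity>\<close>, and cutting \<open>w\<^sup>j\<close> into pieces that each contain
  both letters produces separating edges with pairwise disjoint endpoints. A geodesic from
  \<open>\<infinity>\<close> to \<open>w\<^sup>j\<infinity>\<close> must cross all of them, so it has length at least \<open>j - 1\<close>, and at least
  \<open>2j - 4\<close> if each letter occurs twice in \<open>w\<close> (cut on both sides of a letter change in every
  copy). Thus \<open>l(w) \<ge> 1\<close>, resp. \<open>l(w) \<ge> 2\<close>. Conversely \<open>U\<^sup>mV\<^sup>n\<close> moves \<open>\<infinity>\<close> a distance of at most 2,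
  and some vertex a distance of 1 when \<open>m = 1\<close> or \<open>n = 1\<close>; if \<open>m, n \<ge> 2\<close>, every word with
  the same letter counts has each letter at least twice.\<close>

section \<open>Integer matrices acting on the Farey graph\<close>

definition mat2_app :: "mat2 \<Rightarrow> int \<times> int \<Rightarrow> int \<times> int" where
  "mat2_app M v = (case M of (a, b, c, d) \<Rightarrow> case v of (p, q) \<Rightarrow> (a * p + b * q, c * p + d * q))"

definition mat2_det :: "mat2 \<Rightarrow> int" where
  "mat2_det M = (case M of (a, b, c, d) \<Rightarrow> a * d - b * c)"

definition mat2_adj :: "mat2 \<Rightarrow> mat2" where
  "mat2_adj M = (case M of (a, b, c, d) \<Rightarrow> (d, - b, - c, a))"

definition mat2_pos :: "mat2 \<Rightarrow> bool" where
  "mat2_pos M = (case M of (a, b, c, d) \<Rightarrow> 1 \<le> a \<and> 1 \<le> b \<and> 1 \<le> c \<and> 1 \<le> d)"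

definition vec_det :: "int \<times> int \<Rightarrow> int \<times> int \<Rightarrow> int" where
  "vec_det u v = (case u of (p, q) \<Rightarrow> case v of (r, s) \<Rightarrow> p * s - q * r)"

lemma mat2_mult_assoc: "mat2_mult (mat2_mult A B) C = mat2_mult A (mat2_mult B C)"
  by (cases A; cases B; cases C) (simp add: mat2_mult_def algebra_simps)

lemma mat2_mult_id_left [simp]: "mat2_mult mat2_id M = M"
  by (cases M) (simp add: mat2_mult_def mat2_id_def)

lemma mat2_det_mult: "mat2_det (mat2_mult A B) = mat2_det A * mat2_det B"
  by (cases A; cases B) (simp add: mat2_mult_def mat2_det_def algebra_simps)

lemma mat2_app_mult: "mat2_app (mat2_mult M N) v = mat2_app M (mat2_app N v)"
  by (cases M; cases N; cases v) (simp add: mat2_app_def mat2_mult_def algebra_simps)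

lemma mat2_app_adj_app:
  assumes "mat2_det M = 1" shows "mat2_app (mat2_adj M) (mat2_app M v) = v"
proof -
  obtain a b c d where M: "M = (a, b, c, d)" by (cases M) auto
  have "d * (a * p + b * q) + - b * (c * p + d * q) = (a * d - b * c) * p"
    and "- c * (a * p + b * q) + a * (c * p + d * q) = (a * d - b * c) * q" for p q :: int
    by (simp_all add: algebra_simps)
  with assms show ?thesis
    by (cases v) (simp add: M mat2_app_def mat2_adj_def mat2_det_def)
qed

lemma mat2_app_app_adj:
  assumes "mat2_det M = 1" shows "mat2_app M (mat2_app (mat2_adj M) v) = v"
proof -
  obtain a b c d where M: "M = (a, b, c, d)" by (cases M) auto
  have "a * (d * p + - b * q) + b * (- c * p + a * q) = (a * d - b * c) * p"
    and "c * (d * p + - b * q) + d * (- c * p + a * q) = (a * d - b * c) * q" for p q :: int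
    by (simp_all add: algebra_simps)
  with assms show ?thesis
    by (cases v) (simp add: M mat2_app_def mat2_adj_def mat2_det_def)
qed

lemma vec_det_mat2_app: "vec_det (mat2_app M u) (mat2_app M v) = mat2_det M * vec_det u v"
  by (cases M; cases u; cases v) (simp add: vec_det_def mat2_app_def mat2_det_def algebra_simps)

lemma mat2_det_adj [simp]: "mat2_det (mat2_adj M) = mat2_det M"
  by (cases M) (simp add: mat2_det_def mat2_adj_def)

lemma coprime_mat2_app:
  assumes "mat2_det M = 1" "mat2_app M (p, q) = (x, y)" "coprime p q"
  shows "coprime x y"
proof (rule coprimeI)
  fix e assume "e dvd x" "e dvd y"
  moreover have "mat2_app (mat2_adj M) (x, y) = (p, q)"
    using mat2_app_adj_app[OF assms(1)] assms(2) by metis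
  ultimately have "e dvd p" "e dvd q"
    by (cases M; force simp: mat2_app_def mat2_adj_def)+
  with assms(3) show "is_unit e" using coprime_common_divisor by blast
qed

lemma farey_norm_cases: "farey_norm (p, q) = (p, q) \<or> farey_norm (p, q) = (- p, - q)"
  by (simp add: farey_norm_def)

lemma farey_norm_neg: "farey_norm (- p, - q) = farey_norm (p, q)"
  by (auto simp: farey_norm_def)

lemma mat2_app_neg: "mat2_app M (- p, - q) = (case mat2_app M (p, q) of (x, y) \<Rightarrow> (- x, - y))"
  by (cases M) (simp add: mat2_app_def algebra_simps)

lemma farey_norm_mat2_app_norm: "farey_norm (mat2_app M (farey_norm v)) = farey_norm (mat2_app M v)"
proof -
  obtain p q where v: "v = (p, q)" by fastforce
  have "farey_norm (mat2_app M (- p, - q)) = farey_norm (mat2_app M (p, q))"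
    by (simp add: mat2_app_neg farey_norm_neg split: prod.split)
  then show ?thesis using farey_norm_cases[of p q] v by auto
qed

lemma mat2_act_eq_norm_app: "mat2_act M v = farey_norm (mat2_app M v)"
  by (cases M; cases v) (simp add: mat2_act_def mat2_app_def)

lemma mat2_act_mult: "mat2_act (mat2_mult M N) v = mat2_act M (mat2_act N v)"
  by (simp add: mat2_act_eq_norm_app mat2_app_mult farey_norm_mat2_app_norm)

lemma mat2_act_id_inf [simp]: "mat2_act mat2_id farey_inf = farey_inf"
  by (simp add: mat2_act_def mat2_id_def farey_inf_def farey_norm_def)

lemma farey_vertex_nonzero: "farey_vertex v \<Longrightarrow> v \<noteq> (0, 0)"
  by (auto simp: farey_vertex_def)

lemma farey_vertex_norm:
  assumes "coprime p q" shows "farey_vertex (farey_norm (p, q))"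
proof -
  have "q = 0 \<Longrightarrow> p = 1 \<or> p = -1" using assms by auto
  with assms show ?thesis by (auto simp: farey_norm_def farey_vertex_def)
qed

lemma farey_vertex_mat2_act:
  assumes "farey_vertex v" "mat2_det M = 1" shows "farey_vertex (mat2_act M v)"
proof -
  obtain p q x y where v: "v = (p, q)" and xy: "mat2_app M (p, q) = (x, y)"
    by (metis surj_pair)
  have "coprime x y"
    using coprime_mat2_app[OF assms(2) xy] assms(1) v by (simp add: farey_vertex_def)
  then show ?thesis by (simp add: mat2_act_eq_norm_app v xy farey_vertex_norm)
qed

lemma abs_vec_det_farey_norm: "\<bar>vec_det (farey_norm u) (farey_norm v)\<bar> = \<bar>vec_det u v\<bar>"
  using farey_norm_cases[of "fst u" "snd u"] farey_norm_cases[of "fst v" "snd v"]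
  by (cases u; cases v) (auto simp: vec_det_def algebra_simps)

lemma farey_adj_iff: "farey_adj u v \<longleftrightarrow> farey_vertex u \<and> farey_vertex v \<and> \<bar>vec_det u v\<bar> = 1"
  by (cases u; cases v) (simp add: farey_adj_def vec_det_def)

lemma vec_det_swap: "vec_det v u = - vec_det u v"
  by (cases u; cases v) (simp add: vec_det_def)

lemma farey_adj_sym: "farey_adj u v \<Longrightarrow> farey_adj v u"
  by (auto simp: farey_adj_iff vec_det_swap[of u v])

lemma farey_adj_mat2_act:
  assumes "farey_adj u v" "mat2_det M = 1"
  shows "farey_adj (mat2_act M u) (mat2_act M v)"
proof -
  have "\<bar>vec_det (mat2_act M u) (mat2_act M v)\<bar> = \<bar>vec_det u v\<bar>"
    using assms(2) by (simp add: mat2_act_eq_norm_app abs_vec_det_farey_norm vec_det_mat2_app)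
  with assms show ?thesis by (simp add: farey_adj_iff farey_vertex_mat2_act)
qed

lemma farey_path_mat2_act:
  "(farey_adj ^^ k) u v \<Longrightarrow> mat2_det M = 1 \<Longrightarrow> (farey_adj ^^ k) (mat2_act M u) (mat2_act M v)"
proof (induction k arbitrary: v)
  case (Suc k)
  then obtain z where "(farey_adj ^^ k) u z" "farey_adj z v" by (auto elim: relpowp_Suc_E)
  with Suc show ?case by (meson farey_adj_mat2_act relpowp_Suc_I)
qed simp

lemma farey_dist_le: "(farey_adj ^^ k) u v \<Longrightarrow> farey_dist u v \<le> k"
  unfolding farey_dist_def by (rule Least_le)

lemma farey_path_dist: "(farey_adj ^^ k) u v \<Longrightarrow> (farey_adj ^^ farey_dist u v) u v"
  unfolding farey_dist_def by (rule LeastI)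

section \<open>Words in \<open>U\<close> and \<open>V\<close>\<close>

lemma word_mat_Nil [simp]: "word_mat [] = mat2_id"
  by (simp add: word_mat_def)

lemma word_mat_Cons [simp]: "word_mat (x # w) = mat2_mult (letter x) (word_mat w)"
  by (simp add: word_mat_def)

lemma word_mat_append: "word_mat (u @ v) = mat2_mult (word_mat u) (word_mat v)"
  by (induction u) (simp_all add: mat2_mult_assoc)

lemma mat2_det_letter [simp]: "mat2_det (letter x) = 1"
  by (simp add: mat2_det_def letter_def matU_def matV_def)

lemma mat2_det_word_mat [simp]: "mat2_det (word_mat w) = 1"
  by (induction w) (simp_all add: mat2_det_mult, simp add: mat2_det_def mat2_id_def)

lemma word_mat_entries:
  "word_mat w = (a, b, c, d) \<Longrightarrow> 1 \<le> a \<and> 1 \<le> d \<and> 0 \<le> b \<and> 0 \<le> c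
     \<and> (True \<in> set w \<longrightarrow> 1 \<le> b) \<and> (False \<in> set w \<longrightarrow> 1 \<le> c)"
proof (induction w arbitrary: a b c d)
  case Nil then show ?case by (simp add: mat2_id_def)
next
  case (Cons x w)
  obtain a' b' c' d' where w: "word_mat w = (a', b', c', d')" by (cases "word_mat w") auto
  from Cons.IH[OF w] Cons.prems show ?case
    by (cases x) (auto simp: w letter_def matU_def matV_def mat2_mult_def)
qed

definition has_both_letters :: "bool list \<Rightarrow> bool" where
  "has_both_letters w \<longleftrightarrow> True \<in> set w \<and> False \<in> set w"

lemma has_both_letters_iff_count:
  "has_both_letters w \<longleftrightarrow> 0 < count_list w True \<and> 0 < count_list w False"
  unfolding has_both_letters_def neq0_conv[symmetric] count_list_0_iff by blast

lemma mat2_pos_word_mat: "has_both_letters w \<Longrightarrow> mat2_pos (word_mat w)"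
  using word_mat_entries[of w] by (cases "word_mat w") (auto simp: mat2_pos_def has_both_letters_def)

lemma has_both_letters_concat: "u \<in> set us \<Longrightarrow> has_both_letters u \<Longrightarrow> has_both_letters (concat us)"
  by (auto simp: has_both_letters_def)

lemma word_mat_orbit:
  "(mat2_act (word_mat w) ^^ j) farey_inf = mat2_act (word_mat (concat (replicate j w))) farey_inf"
  by (induction j) (simp_all add: word_mat_append mat2_act_mult)

lemma farey_path_word_mat: "\<exists>k. (farey_adj ^^ k) farey_inf (mat2_act (word_mat w) farey_inf)"
proof (induction w)
  case Nil show ?case by (rule exI[of _ 0]) simp
next
  case (Cons x w)
  then obtain k where "(farey_adj ^^ k) farey_inf (mat2_act (word_mat w) farey_inf)" by blast
  then have path: "(farey_adj ^^ k) (mat2_act (letter x) farey_inf) (mat2_act (word_mat (x # w)) farey_inf)"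
    by (simp add: farey_path_mat2_act mat2_act_mult)
  show ?case
  proof (cases x)
    case True
    then have "mat2_act (letter x) farey_inf = farey_inf"
      by (simp add: letter_def matU_def mat2_act_def farey_inf_def farey_norm_def)
    with path show ?thesis by auto
  next
    case False
    then have "farey_adj farey_inf (mat2_act (letter x) farey_inf)"
      by (simp add: letter_def matV_def mat2_act_def farey_inf_def farey_norm_def
          farey_adj_def farey_vertex_def)
    with path show ?thesis by (blast intro: relpowp_Suc_I2)
  qed
qed

section \<open>Separating edges\<close>

text \<open>For \<open>P \<in> SL(2,\<int>)\<close> the Farey edge from \<open>P\<infinity>\<close> to \<open>P0\<close> separates the graph:
  \<open>edge_side P v\<close> is the product of the coordinates of \<open>P\<inverse>v\<close>, whose sign tells on which
  side of that edge \<open>v\<close> lies; it vanishes exactly at the two endpoints.\<close>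

definition edge_side :: "mat2 \<Rightarrow> int \<times> int \<Rightarrow> int" where
  "edge_side P v = (case mat2_app (mat2_adj P) v of (x, y) \<Rightarrow> x * y)"

lemma edge_side_farey_norm [simp]: "edge_side P (farey_norm v) = edge_side P v"
proof -
  obtain p q where v: "v = (p, q)" by fastforce
  have "edge_side P (- p, - q) = edge_side P (p, q)"
    by (simp add: edge_side_def mat2_app_neg split: prod.split)
  then show ?thesis using farey_norm_cases[of p q] v by auto
qed

lemma abs_cross_ge_two:
  fixes a b c d :: int
  assumes "a * b < 0" "0 < c * d"
  shows "2 \<le> \<bar>a * d - b * c\<bar>"
proof -
  have "(a * d) * (b * c) = (a * b) * (c * d)" by (simp add: algebra_simps)
  also have "\<dots> < 0" using assms by (simp add: mult_neg_pos)
  finally have "a * d < 0 \<and> 0 < b * c \<or> 0 < a * d \<and> b * c < 0"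
    by (auto simp: mult_less_0_iff)
  then show ?thesis by auto
qed

lemma edge_side_farey_adj:
  assumes "mat2_det P = 1" "farey_adj u v" "edge_side P u < 0"
  shows "edge_side P v \<le> 0"
proof (rule ccontr)
  assume v: "\<not> edge_side P v \<le> 0"
  obtain a b c d where u': "mat2_app (mat2_adj P) u = (a, b)" and v': "mat2_app (mat2_adj P) v = (c, d)"
    by (metis surj_pair)
  have "\<bar>a * d - b * c\<bar> = \<bar>vec_det u v\<bar>"
    using vec_det_mat2_app[of "mat2_adj P" u v] assms(1) by (simp add: u' v' vec_det_def)
  also have "\<dots> = 1" using assms(2) by (simp add: farey_adj_iff)
  finally show False
    using abs_cross_ge_two[of a b c d] assms(3) v by (simp add: edge_side_def u' v')
qed

lemma edge_side_inf:
  assumes "mat2_pos P" shows "edge_side P farey_inf < 0"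
  using assms by (cases P) (simp add: edge_side_def mat2_pos_def mat2_app_def mat2_adj_def farey_inf_def)

lemma edge_side_mult_inf:
  assumes "mat2_det P = 1" "mat2_pos R"
  shows "0 < edge_side P (mat2_act (mat2_mult P R) farey_inf)"
proof -
  have "edge_side P (mat2_act (mat2_mult P R) farey_inf) = edge_side P (mat2_app P (mat2_app R (1, 0)))"
    by (simp add: mat2_act_eq_norm_app mat2_app_mult farey_inf_def)
  also have "\<dots> = (case mat2_app R (1, 0) of (x, y) \<Rightarrow> x * y)"
    using assms(1) by (simp add: edge_side_def mat2_app_adj_app)
  finally show ?thesis using assms(2) by (cases R) (simp add: mat2_pos_def mat2_app_def)
qed

text \<open>The edge of \<open>P R\<close> lies strictly on the positive side of the edge of \<open>P\<close> when \<open>R\<close> has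
  positive entries, because \<open>R\<close> maps the quadrant boundary \<open>{xy = 0}\<close> into the open quadrant.\<close>

lemma edge_side_mult_pos:
  assumes "mat2_det P = 1" "mat2_det R = 1" "mat2_pos R" "v \<noteq> (0, 0)"
    and "edge_side (mat2_mult P R) v = 0"
  shows "0 < edge_side P v"
proof -
  obtain x y where xy: "mat2_app (mat2_adj (mat2_mult P R)) v = (x, y)" by (metis surj_pair)
  have det: "mat2_det (mat2_mult P R) = 1" using assms(1,2) by (simp add: mat2_det_mult)
  have v: "v = mat2_app P (mat2_app R (x, y))"
    using mat2_app_app_adj[OF det, of v] by (simp add: xy mat2_app_mult)
  have "(x, y) \<noteq> (0, 0)" using assms(4) v by (cases P; cases R) (auto simp: mat2_app_def)
  then have sq: "0 < x * x + y * y" by (simp add: sum_squares_gt_zero_iff)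
  have xy0: "x * y = 0" using assms(5) by (simp add: edge_side_def xy)
  obtain a b c d where R: "R = (a, b, c, d)" by (cases R) auto
  have "(a * x + b * y) * (c * x + d * y) = (a * c) * (x * x) + (b * d) * (y * y) + (a * d + b * c) * (x * y)"
    by (simp add: algebra_simps)
  also have "\<dots> \<ge> x * x + y * y"
  proof -
    have "1 \<le> a * c" "1 \<le> b * d"
      using assms(3) mult_mono[of 1 a 1 c] mult_mono[of 1 b 1 d] by (simp_all add: R mat2_pos_def)
    then have "x * x \<le> (a * c) * (x * x)" "y * y \<le> (b * d) * (y * y)"
      by (simp_all add: mult_le_cancel_right1)
    then show ?thesis by (simp add: xy0)
  qed
  finally have "0 < (a * x + b * y) * (c * x + d * y)" using sq by linarith
  with assms(1) show ?thesis by (simp add: edge_side_def v mat2_app_adj_app, simp add: R mat2_app_def)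
qed

text \<open>A path from \<open>x\<close> to \<open>y\<close> must cross every separator between them, and it cannot cross two
  separators at the same vertex.\<close>

lemma card_separators_le_path_length:
  fixes R :: "'v \<Rightarrow> 'v \<Rightarrow> bool" and \<sigma> :: "'i \<Rightarrow> 'v \<Rightarrow> int"
  assumes "(R ^^ k) x y"
    and "\<And>i. i \<in> I \<Longrightarrow> \<sigma> i x < 0" "\<And>i. i \<in> I \<Longrightarrow> 0 < \<sigma> i y"
    and "\<And>i u v. i \<in> I \<Longrightarrow> R u v \<Longrightarrow> \<sigma> i u < 0 \<Longrightarrow> \<sigma> i v \<le> 0"
    and "\<And>i i' u v. i \<in> I \<Longrightarrow> i' \<in> I \<Longrightarrow> R u v \<Longrightarrow> \<sigma> i u = 0 \<Longrightarrow> \<sigma> i' u = 0 \<Longrightarrow> i = i'"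
  shows "card I \<le> k"
  using assms
proof (induction k arbitrary: y I)
  case 0
  then have "I = {}" by fastforce
  then show ?case by simp
next
  case (Suc k)
  then obtain z where path: "(R ^^ k) x z" and zy: "R z y" by (auto elim: relpowp_Suc_E)
  define J where "J = {i \<in> I. \<sigma> i z \<noteq> 0}"
  have "0 < \<sigma> i z" if "i \<in> J" for i
    using that Suc.prems(3,4)[of i] zy by (force simp: J_def)
  then have "card J \<le> k"
    using Suc.IH[OF path, of J] Suc.prems(2,4,5) by (auto simp: J_def)
  moreover have "card (I - J) \<le> 1"
  proof (cases "I - J = {}")
    case False
    then obtain i where "i \<in> I - J" by blast
    then have "I - J \<subseteq> {i}" using Suc.prems(5) zy by (auto simp: J_def)
    then show ?thesis using card_mono[of "{i}" "I - J"] by simp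
  qed (metis card.empty le0)
  moreover have "card I \<le> card J + card (I - J)"
    using card_Un_le[of J "I - J"] by (simp add: J_def Un_absorb1)
  ultimately show ?case by simp
qed

lemma farey_dist_ge_pieces:
  assumes "\<And>u. u \<in> set us \<Longrightarrow> has_both_letters u"
  shows "length us - 1 \<le> farey_dist farey_inf (mat2_act (word_mat (concat us)) farey_inf)"
proof -
  define y where "y = mat2_act (word_mat (concat us)) farey_inf"
  define P where "P k = word_mat (concat (take k us))" for k
  define B where "B k k' = word_mat (concat (drop k (take k' us)))" for k k'
  have between: "mat2_pos (B k k')" if "k < k'" "k' \<le> length us" for k k'
  proof -
    have "us ! k \<in> set (drop k (take k' us))"
      using that by (auto simp: in_set_conv_nth intro!: exI[of _ 0])
    moreover have "has_both_letters (us ! k)" using that by (simp add: assms)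
    ultimately show ?thesis unfolding B_def by (intro mat2_pos_word_mat has_both_letters_concat)
  qed
  have P_mult: "P k' = mat2_mult (P k) (B k k')" if "k \<le> k'" for k k'
    using that by (simp add: P_def B_def flip: word_mat_append concat_append)
      (metis append_take_drop_id min.absorb1 take_take)
  obtain n where "(farey_adj ^^ n) farey_inf y"
    using farey_path_word_mat unfolding y_def by blast
  then have path: "(farey_adj ^^ farey_dist farey_inf y) farey_inf y"
    by (rule farey_path_dist)
  have "card {1..<length us} \<le> farey_dist farey_inf y"
  proof (rule card_separators_le_path_length[OF path, where \<sigma> = "\<lambda>k. edge_side (P k)"])
    fix k assume k: "k \<in> {1..<length us}"
    then show "edge_side (P k) farey_inf < 0"
      using between[of 0 k] P_mult[of 0 k] by (simp add: P_def edge_side_inf)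
    have "y = mat2_act (mat2_mult (P k) (B k (length us))) farey_inf"
      using P_mult[of k "length us"] k by (simp add: y_def P_def)
    then show "0 < edge_side (P k) y"
      using between[of k "length us"] k by (simp add: P_def edge_side_mult_inf)
  next
    fix k u v assume "farey_adj u v" "edge_side (P k) u < 0"
    then show "edge_side (P k) v \<le> 0" by (simp add: P_def edge_side_farey_adj)
  next
    fix k k' u v assume k: "k \<in> {1..<length us}" "k' \<in> {1..<length us}" and "farey_adj u v"
      and zero: "edge_side (P k) u = 0" "edge_side (P k') u = 0"
    then have u: "u \<noteq> (0, 0)" by (simp add: farey_adj_iff farey_vertex_nonzero)
    have False if "l < l'" "l' < length us" "edge_side (P l) u = 0" "edge_side (P l') u = 0" for l l'
      using edge_side_mult_pos[of "P l" "B l l'" u] between[of l l'] P_mult[of l l'] that u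
      by (simp add: P_def B_def)
    then show "k = k'" using k zero by (metis atLeastLessThan_iff linorder_neqE_nat)
  qed
  then show ?thesis by (simp add: y_def)
qed

section \<open>Stable translation length\<close>

lemma stable_len_ge:
  fixes a b :: nat
  assumes "\<And>j. a * j \<le> farey_dist farey_inf ((mat2_act g ^^ j) farey_inf) + b"
  shows "ereal a \<le> stable_len g"
proof -
  let ?f = "\<lambda>j::nat. ereal (real (farey_dist farey_inf ((mat2_act g ^^ j) farey_inf)) / real j)"
  have ev: "\<forall>\<^sub>F j in sequentially. ereal (a - b / real j) \<le> ?f j"
  proof (rule eventually_sequentiallyI[of 1])
    fix j :: nat assume j: "1 \<le> j"
    have "a * real j - b \<le> real (farey_dist farey_inf ((mat2_act g ^^ j) farey_inf))"
      using of_nat_mono[OF assms[of j], where 'a = real] by simp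
    then have "(a * real j - b) / real j \<le> real (farey_dist farey_inf ((mat2_act g ^^ j) farey_inf)) / real j"
      by (rule divide_right_mono) simp
    moreover have "a - b / real j = (a * real j - b) / real j" using j by (simp add: field_simps)
    ultimately show "ereal (a - b / real j) \<le> ?f j" by simp
  qed
  have "(\<lambda>j::nat. ereal (a - b / real j)) \<longlonglongrightarrow> ereal a"
    by (intro tendsto_ereal) (auto intro!: tendsto_eq_intros lim_const_over_n)
  then have "ereal a = Liminf sequentially (\<lambda>j::nat. ereal (a - b / real j))"
    by (rule lim_imp_Liminf[OF trivial_limit_sequentially, symmetric])
  also have "\<dots> \<le> Liminf sequentially ?f" by (rule Liminf_mono[OF ev])
  finally show ?thesis by (simp add: stable_len_def)
qed

lemma stable_len_le:
  fixes a b :: nat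
  assumes "\<And>j. farey_dist farey_inf ((mat2_act g ^^ j) farey_inf) \<le> a * j + b"
  shows "stable_len g \<le> ereal a"
proof -
  let ?f = "\<lambda>j::nat. ereal (real (farey_dist farey_inf ((mat2_act g ^^ j) farey_inf)) / real j)"
  have ev: "\<forall>\<^sub>F j in sequentially. ?f j \<le> ereal (a + b / real j)"
  proof (rule eventually_sequentiallyI[of 1])
    fix j :: nat assume j: "1 \<le> j"
    have "real (farey_dist farey_inf ((mat2_act g ^^ j) farey_inf)) \<le> a * real j + b"
      using of_nat_mono[OF assms[of j], where 'a = real] by simp
    then have "real (farey_dist farey_inf ((mat2_act g ^^ j) farey_inf)) / real j \<le> (a * real j + b) / real j"
      by (rule divide_right_mono) simp
    moreover have "(a * real j + b) / real j = a + b / real j" using j by (simp add: field_simps)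
    ultimately show "?f j \<le> ereal (a + b / real j)" by simp
  qed
  have "(\<lambda>j::nat. ereal (a + b / real j)) \<longlonglongrightarrow> ereal a"
    by (intro tendsto_ereal) (auto intro!: tendsto_eq_intros lim_const_over_n)
  then have "Liminf sequentially (\<lambda>j::nat. ereal (a + b / real j)) = ereal a"
    by (rule lim_imp_Liminf[OF trivial_limit_sequentially])
  moreover have "Liminf sequentially ?f \<le> Liminf sequentially (\<lambda>j::nat. ereal (a + b / real j))"
    by (rule Liminf_mono[OF ev])
  ultimately show ?thesis by (simp add: stable_len_def)
qed

lemma stable_len_word_ge_one:
  assumes "has_both_letters w" shows "1 \<le> stable_len (word_mat w)"
proof -
  have "ereal (real 1) \<le> stable_len (word_mat w)"
  proof (rule stable_len_ge)
    fix j
    show "1 * j \<le> farey_dist farey_inf ((mat2_act (word_mat w) ^^ j) farey_inf) + 1"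
      using farey_dist_ge_pieces[of "replicate j w"] assms by (simp add: word_mat_orbit)
  qed
  then show ?thesis by (metis of_nat_1 one_ereal_def)
qed

lemma split_at_letter_change:
  "has_both_letters w \<Longrightarrow> \<exists>A x y B. w = A @ [x, y] @ B \<and> x \<noteq> y"
proof (induction w)
  case (Cons a w)
  then obtain b v where w: "w = b # v" by (cases w) (auto simp: has_both_letters_def)
  show ?case
  proof (cases "a = b")
    case True
    then have "has_both_letters w" using Cons.prems w by (auto simp: has_both_letters_def)
    then obtain A x y B where "w = A @ [x, y] @ B" "x \<noteq> y" using Cons.IH by blast
    then have "a # w = (a # A) @ [x, y] @ B" "x \<noteq> y" by simp_all
    then show ?thesis by blast
  next
    case False
    then have "a # w = [] @ [a, b] @ v" "a \<noteq> b" by (simp_all add: w)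
    then show ?thesis by blast
  qed
qed (simp add: has_both_letters_def)

text \<open>With \<open>w = A x y B\<close>, cut \<open>w\<^sup>j\<close> on both sides of the letter change \<open>x y\<close> in each inner
  copy of \<open>w\<close>; the pieces \<open>x y\<close> and \<open>B A\<close> between consecutive cuts contain both letters.\<close>

lemma stable_len_word_ge_two:
  assumes "2 \<le> count_list w True" "2 \<le> count_list w False"
  shows "2 \<le> stable_len (word_mat w)"
proof -
  have "has_both_letters w" using assms by (simp add: has_both_letters_iff_count)
  then obtain A x y B where w: "w = A @ [x, y] @ B" and "x \<noteq> y"
    using split_at_letter_change by blast
  have xy: "count_list [x, y] b = 1" for b using \<open>x \<noteq> y\<close> by (cases b; cases x) auto
  have cw: "count_list w b = count_list (B @ A) b + count_list [x, y] b" for b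
    unfolding w count_list_append by linarith
  have c2: "2 \<le> count_list w b" for b using assms by (cases b) simp_all
  have "0 < count_list (B @ A) b" for b using cw[of b] c2[of b] xy[of b] by linarith
  then have BA: "has_both_letters (B @ A)" by (simp add: has_both_letters_iff_count)
  have "2 * j \<le> farey_dist farey_inf ((mat2_act (word_mat w) ^^ j) farey_inf) + 4" for j
  proof (cases "j < 3")
    case False
    then obtain t where j: "j = Suc (Suc (Suc t))" using less_imp_Suc_add[of 2 j] by auto
    define us where "us = (w @ A) # [x, y] # concat (replicate t [B @ A, [x, y]]) @ [B @ w]"
    have "A @ [x, y] @ concat (concat (replicate t [B @ A, [x, y]])) @ B @ zs
        = concat (replicate (Suc t) w) @ zs" for zs
      by (induction t) (simp_all add: w)
    then have "concat us = concat ((w # replicate (Suc t) w) @ [w])" by (simp add: us_def)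
    also have "\<dots> = concat (replicate j w)" by (simp add: j replicate_append_same)
    finally have concat_us: "concat us = concat (replicate j w)" .
    have "has_both_letters u" if "u \<in> set us" for u
    proof -
      have "u \<in> {w @ A, [x, y], B @ A, B @ w}" using that by (auto simp: us_def split: if_splits)
      moreover have "has_both_letters [x, y]" using \<open>x \<noteq> y\<close> by (cases x) (auto simp: has_both_letters_def)
      ultimately show ?thesis using \<open>has_both_letters w\<close> BA by (auto simp: has_both_letters_def)
    qed
    then have "length us - 1 \<le> farey_dist farey_inf ((mat2_act (word_mat w) ^^ j) farey_inf)"
      unfolding word_mat_orbit concat_us[symmetric] by (rule farey_dist_ge_pieces)
    moreover have "length us = 2 * j - 3"
      by (simp add: us_def j length_concat sum_list_replicate)
    ultimately show ?thesis using j by linarith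
  qed linarith
  then have "ereal (real 2) \<le> stable_len (word_mat w)" by (rule stable_len_ge)
  then show ?thesis by (metis of_nat_numeral numeral_eq_ereal)
qed

lemma word_mat_UmVn: "word_mat (replicate m True @ replicate n False) = (1 + int m * int n, int m, int n, 1)"
proof -
  have "word_mat (replicate m True) = (1, int m, 0, 1)"
    by (induction m) (simp_all add: mat2_id_def letter_def matU_def mat2_mult_def)
  moreover have "word_mat (replicate n False) = (1, 0, int n, 1)"
    by (induction n) (simp_all add: mat2_id_def letter_def matV_def mat2_mult_def)
  ultimately show ?thesis by (simp add: word_mat_append mat2_mult_def)
qed

lemma farey_path_orbit:
  assumes "mat2_det g = 1" "(farey_adj ^^ k) v (mat2_act g v)"
  shows "(farey_adj ^^ (k * j)) v ((mat2_act g ^^ j) v)"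
proof (induction j)
  case (Suc j)
  with assms have "(farey_adj ^^ (k + k * j)) v (mat2_act g ((mat2_act g ^^ j) v))"
    by (blast intro: relpowp_trans farey_path_mat2_act)
  then show ?case by simp
qed simp

lemma farey_path_funpow_mat2_act:
  "mat2_det g = 1 \<Longrightarrow> (farey_adj ^^ k) u v \<Longrightarrow> (farey_adj ^^ k) ((mat2_act g ^^ j) u) ((mat2_act g ^^ j) v)"
  by (induction j) (simp_all add: farey_path_mat2_act)

text \<open>Any vertex \<open>v\<close> may replace the base point \<open>\<infinity>\<close>: the detour through \<open>v\<close> costs \<open>2a\<close>,
  which does not grow with the exponent.\<close>

lemma stable_len_le_displacement:
  assumes "mat2_det g = 1" "(farey_adj ^^ a) farey_inf v" "(farey_adj ^^ a) v farey_inf"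
    and "(farey_adj ^^ k) v (mat2_act g v)"
  shows "stable_len g \<le> ereal (real k)"
proof (rule stable_len_le)
  fix j
  have "(farey_adj ^^ (k * j)) v ((mat2_act g ^^ j) v)"
    using assms(1,4) by (rule farey_path_orbit)
  moreover have "(farey_adj ^^ a) ((mat2_act g ^^ j) v) ((mat2_act g ^^ j) farey_inf)"
    using assms(1,3) by (rule farey_path_funpow_mat2_act)
  ultimately have "(farey_adj ^^ (a + k * j + a)) farey_inf ((mat2_act g ^^ j) farey_inf)"
    using assms(2) by (blast intro: relpowp_trans)
  then show "farey_dist farey_inf ((mat2_act g ^^ j) farey_inf) \<le> k * j + 2 * a"
    using farey_dist_le by fastforce
qed

lemma stable_len_UmVn_le_two:
  assumes "1 \<le> n"
  shows "stable_len (word_mat (replicate m True @ replicate n False)) \<le> 2"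
proof -
  define g :: mat2 where "g = (1 + int m * int n, int m, int n, 1)"
  have det: "mat2_det g = 1" by (simp add: g_def mat2_det_def)
  have g_inf: "mat2_act g farey_inf = (1 + int m * int n, int n)"
    using assms by (simp add: g_def mat2_act_def farey_inf_def farey_norm_def)
  then have "coprime (1 + int m * int n) (int n)"
    using farey_vertex_mat2_act[OF _ det, of farey_inf] by (simp add: farey_vertex_def farey_inf_def)
  then have "farey_adj (int m, 1) (mat2_act g farey_inf)"
    using assms by (simp add: g_inf farey_adj_def farey_vertex_def algebra_simps)
  moreover have "farey_adj farey_inf (int m, 1)" by (simp add: farey_adj_def farey_vertex_def farey_inf_def)
  ultimately have "(farey_adj ^^ Suc (Suc 0)) farey_inf (mat2_act g farey_inf)"
    by (blast intro: relpowp_Suc_I2 relpowp_Suc_I relpowp_0_I)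
  then have "stable_len g \<le> ereal (real 2)"
    unfolding numeral_2_eq_2 by (rule stable_len_le_displacement[OF det relpowp_0_I relpowp_0_I])
  then show ?thesis by (metis g_def word_mat_UmVn of_nat_numeral numeral_eq_ereal)
qed

lemma stable_len_UmVn_le_one:
  assumes "m = 1 \<or> n = 1"
  shows "stable_len (word_mat (replicate m True @ replicate n False)) \<le> 1"
proof -
  define g :: mat2 where "g = (1 + int m * int n, int m, int n, 1)"
  have det: "mat2_det g = 1" by (simp add: g_def mat2_det_def)
  have "stable_len g \<le> ereal (real 1)"
    using assms
  proof
    assume "n = 1"
    then have "(farey_adj ^^ 1) farey_inf (mat2_act g farey_inf)"
      unfolding relpowp_1
      by (simp add: g_def mat2_act_def farey_inf_def farey_norm_def farey_adj_def farey_vertex_def)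
    then show ?thesis by (rule stable_len_le_displacement[OF det relpowp_0_I relpowp_0_I])
  next
    assume "m = 1"
    then have "(farey_adj ^^ 1) (0, 1) (mat2_act g (0, 1))"
      unfolding relpowp_1 by (simp add: g_def mat2_act_def farey_norm_def farey_adj_def farey_vertex_def)
    moreover have inf_zero: "farey_adj farey_inf (0, 1)"
      by (simp add: farey_adj_def farey_vertex_def farey_inf_def)
    moreover have "farey_adj (0, 1) farey_inf" using inf_zero by (rule farey_adj_sym)
    ultimately show ?thesis
      using stable_len_le_displacement[OF det, of 1 "(0, 1)" 1] by (simp only: relpowp_1)
  qed
  then show ?thesis by (metis g_def word_mat_UmVn of_nat_1 one_ereal_def)
qed

theorem mainTheorem10:
  fixes m n :: nat
  assumes "m \<ge> 1" and "n \<ge> 1"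
  shows "(\<forall>w. count_list w True = m \<and> count_list w False = n \<longrightarrow>
            stable_len (word_mat (replicate m True @ replicate n False)) \<le> stable_len (word_mat w))
         \<and> stable_len (word_mat (replicate m True @ replicate n False)) \<le> 2"
proof -
  let ?g = "word_mat (replicate m True @ replicate n False)"
  have two: "stable_len ?g \<le> 2" using assms(2) by (rule stable_len_UmVn_le_two)
  have "stable_len ?g \<le> stable_len (word_mat w)"
    if "count_list w True = m" "count_list w False = n" for w
  proof (cases "m = 1 \<or> n = 1")
    case True
    then have "stable_len ?g \<le> 1" by (rule stable_len_UmVn_le_one)
    moreover have "has_both_letters w" using that assms by (simp add: has_both_letters_iff_count)
    then have "1 \<le> stable_len (word_mat w)" by (rule stable_len_word_ge_one)
    ultimately show ?thesis by (rule order_trans)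
  next
    case False
    with that assms have "2 \<le> stable_len (word_mat w)" by (intro stable_len_word_ge_two) auto
    with two show ?thesis by (rule order_trans)
  qed
  with two show ?thesis by blast
qed

end
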